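(* Fix a treatment group $d$, a control group $d'>d$, and a pre-treatment age $a<d-1$. Suppose the No Anticipation assumption holds for both genders $g\in\{f,m\}$ and both groups $d$ and $d'$. Then $$\delta_\theta(f,d,d',a)=\delta_\theta(m,d,d',a)\quad\Longleftrightarrow\quad\frac{\gamma_{\mathrm{PT}}(f,d,d',a)}{APO(f,d,\infty,a)}=\frac{\gamma_{\mathrm{PT}}(m,d,d',a)}{APO(m,d,\infty,a)}.$$
   Context: Population of individuals with gender $G\in\{f,m\}$ and age at first childbirth $D$ (with $D=\infty$ meaning never). For each age $a$ and each (possibly counterfactual) first-birth age $d'\in\mathbb{N}\cup\{\infty\}$ there is a potential outcome (earnings) $Y_a(d')$; observed earnings satisfy consistency $Y_a=Y_a(D)$. Define $APO(g,d,d',a)=\mathbb{E}[Y_a(d')\mid G=g,D=d]$. Descriptive quantities: $\delta_{\mathrm{APO}}(g,d,d',a)=\mathbb{E}[Y_{d-1}\mid G=g,D=d]+\mathbb{E}[Y_a-Y_{d-1}\mid G=g,D=d']$, $\delta_{\mathrm{ATE}}(g,d,d',a)=\mathbb{E}[Y_a\mid G=g,D=d]-\delta_{\mathrm{APO}}(g,d,d',a)$, $\delta_\theta(g,d,d',a)=\delta_{\mathrm{ATE}}(g,d,d',a)/\delta_{\mathrm{APO}}(g,d,d',a)$. Parallel-trends violation: $\gamma_{\mathrm{PT}}(g,d,d',a)=APO(g,d,\infty,a)-APO(g,d,\infty,d-1)-[APO(g,d',\infty,a)-APO(g,d',\infty,d-1)]$. No Anticipation for gender $g$ and group $d$: $APO(g,d,d,b)=APO(g,d,\infty,b)$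 for every age $b<d$. All denominators appearing are assumed nonzero. *)

theory Defs
  imports "HOL-Probability.Probability" "HOL-Library.Extended_Nat"
begin

datatype gender = Female | Male

text \<open>Population: a probability space M; G :: gender, D :: first-birth age in enat
  (infinity = never); Y a d' = potential earnings at age a under first-birth age d';
  Yo a = observed earnings at age a.\<close>

definition grp :: "'w measure \<Rightarrow> ('w \<Rightarrow> gender) \<Rightarrow> ('w \<Rightarrow> enat) \<Rightarrow> gender \<Rightarrow> enat \<Rightarrow> 'w set" where
  "grp M G D g d = {w \<in> space M. G w = g \<and> D w = d}"

definition cexp :: "'w measure \<Rightarrow> ('w \<Rightarrow> real) \<Rightarrow> 'w set \<Rightarrow> real" where
  "cexp M X A = (LINT w:A|M. X w) / measure M A"

definition APO :: "'w measure \<Rightarrow> ('w \<Rightarrow> gender) \<Rightarrow> ('w \<Rightarrow> enat) \<Rightarrow> (nat \<Rightarrow> enat \<Rightarrow> 'w \<Rightarrow> real)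
    \<Rightarrow> gender \<Rightarrow> enat \<Rightarrow> enat \<Rightarrow> nat \<Rightarrow> real" where
  "APO M G D Y g d d' a = cexp M (Y a d') (grp M G D g d)"

definition delta_APO :: "'w measure \<Rightarrow> ('w \<Rightarrow> gender) \<Rightarrow> ('w \<Rightarrow> enat) \<Rightarrow> (nat \<Rightarrow> 'w \<Rightarrow> real)
    \<Rightarrow> gender \<Rightarrow> nat \<Rightarrow> enat \<Rightarrow> nat \<Rightarrow> real" where
  "delta_APO M G D Yo g d d' a =
     cexp M (Yo (d - 1)) (grp M G D g (enat d))
     + cexp M (\<lambda>w. Yo a w - Yo (d - 1) w) (grp M G D g d')"

definition delta_ATE :: "'w measure \<Rightarrow> ('w \<Rightarrow> gender) \<Rightarrow> ('w \<Rightarrow> enat) \<Rightarrow> (nat \<Rightarrow> 'w \<Rightarrow> real)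
    \<Rightarrow> gender \<Rightarrow> nat \<Rightarrow> enat \<Rightarrow> nat \<Rightarrow> real" where
  "delta_ATE M G D Yo g d d' a =
     cexp M (Yo a) (grp M G D g (enat d)) - delta_APO M G D Yo g d d' a"

definition delta_theta :: "'w measure \<Rightarrow> ('w \<Rightarrow> gender) \<Rightarrow> ('w \<Rightarrow> enat) \<Rightarrow> (nat \<Rightarrow> 'w \<Rightarrow> real)
    \<Rightarrow> gender \<Rightarrow> nat \<Rightarrow> enat \<Rightarrow> nat \<Rightarrow> real" where
  "delta_theta M G D Yo g d d' a =
     delta_ATE M G D Yo g d d' a / delta_APO M G D Yo g d d' a"

definition gamma_PT :: "'w measure \<Rightarrow> ('w \<Rightarrow> gender) \<Rightarrow> ('w \<Rightarrow> enat) \<Rightarrow> (nat \<Rightarrow> enat \<Rightarrow> 'w \<Rightarrow> real)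
    \<Rightarrow> gender \<Rightarrow> nat \<Rightarrow> enat \<Rightarrow> nat \<Rightarrow> real" where
  "gamma_PT M G D Y g d d' a =
     APO M G D Y g (enat d) \<infinity> a - APO M G D Y g (enat d) \<infinity> (d - 1)
     - (APO M G D Y g d' \<infinity> a - APO M G D Y g d' \<infinity> (d - 1))"

definition no_anticipation :: "'w measure \<Rightarrow> ('w \<Rightarrow> gender) \<Rightarrow> ('w \<Rightarrow> enat) \<Rightarrow> (nat \<Rightarrow> enat \<Rightarrow> 'w \<Rightarrow> real)
    \<Rightarrow> gender \<Rightarrow> enat \<Rightarrow> bool" where
  "no_anticipation M G D Y g d \<longleftrightarrow>
     (\<forall>b::nat. enat b < d \<longrightarrow> APO M G D Y g d d b = APO M G D Y g d \<infinity> b)"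

end

theory Submission
  imports Defs
begin

text \<open>Under No Anticipation the observed pre-birth earnings of both groups are their untreated
  potential earnings, so \<open>\<delta>\<^sub>A\<^sub>P\<^sub>O = APO(g,d,\<infinity>,a) - \<gamma>\<^sub>P\<^sub>T\<close> and \<open>\<delta>\<^sub>A\<^sub>T\<^sub>E = \<gamma>\<^sub>P\<^sub>T\<close>.
  Hence \<open>\<delta>\<^sub>\<theta> = \<rho> / (1 - \<rho>)\<close> with \<open>\<rho> = \<gamma>\<^sub>P\<^sub>T / APO(g,d,\<infinity>,a)\<close>, and the odds map
  \<open>\<rho> \<mapsto> \<rho> / (1 - \<rho>)\<close> is injective.\<close>

lemma cexp_cong:
  assumes "A \<in> sets M" and "\<And>w. w \<in> A \<Longrightarrow> X w = Z w"
  shows "cexp M X A = cexp M Z A"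
  unfolding cexp_def using assms by (simp add: set_lebesgue_integral_cong)

lemma cexp_diff:
  assumes "A \<in> sets M" and "integrable M X" and "integrable M Z"
  shows "cexp M (\<lambda>w. X w - Z w) A = cexp M X A - cexp M Z A"
proof -
  have "set_integrable M A X" "set_integrable M A Z"
    using assms integrable_mult_indicator[of A M X] integrable_mult_indicator[of A M Z]
    by (simp_all add: set_integrable_def)
  then show ?thesis
    unfolding cexp_def by (simp add: set_integral_diff diff_divide_distrib)
qed

lemma no_anticipationD:
  assumes "no_anticipation M G D Y g e" and "enat b < e"
  shows "APO M G D Y g e e b = APO M G D Y g e \<infinity> b"
  using assms unfolding no_anticipation_def by blast

lemma odds_eq_iff:
  fixes x y :: real
  assumes "x \<noteq> 1" and "y \<noteq> 1"
  shows "x / (1 - x) = y / (1 - y) \<longleftrightarrow> x = y"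
  using assms by (auto simp: field_simps)

locale potential_outcomes =
  fixes M :: "'w measure" and G :: "'w \<Rightarrow> gender" and D :: "'w \<Rightarrow> enat"
    and Y :: "nat \<Rightarrow> enat \<Rightarrow> 'w \<Rightarrow> real" and Yo :: "nat \<Rightarrow> 'w \<Rightarrow> real"
  assumes G_measurable: "G \<in> M \<rightarrow>\<^sub>M count_space UNIV"
    and D_measurable: "D \<in> M \<rightarrow>\<^sub>M count_space UNIV"
    and integrable_Y: "\<And>b e. integrable M (Y b e)"
    and consistency: "\<And>b w. w \<in> space M \<Longrightarrow> Yo b w = Y b (D w) w"
begin

lemma grp_in_sets: "grp M G D g e \<in> sets M"
  unfolding grp_def using G_measurable D_measurable by measurable

lemma cexp_observed: "cexp M (Yo b) (grp M G D g e) = APO M G D Y g e e b"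
  unfolding APO_def by (rule cexp_cong[OF grp_in_sets]) (simp add: grp_def consistency)

lemma cexp_observed_diff:
  "cexp M (\<lambda>w. Yo b w - Yo c w) (grp M G D g e) = APO M G D Y g e e b - APO M G D Y g e e c"
proof -
  have "cexp M (\<lambda>w. Yo b w - Yo c w) (grp M G D g e)
      = cexp M (\<lambda>w. Y b e w - Y c e w) (grp M G D g e)"
    by (rule cexp_cong[OF grp_in_sets]) (simp add: grp_def consistency)
  also have "\<dots> = APO M G D Y g e e b - APO M G D Y g e e c"
    unfolding APO_def by (rule cexp_diff[OF grp_in_sets integrable_Y integrable_Y])
  finally show ?thesis .
qed

context
  fixes g :: gender and d :: nat and d' :: enat and a :: nat
  assumes no_anticipation_d: "no_anticipation M G D Y g (enat d)"
    and no_anticipation_d': "no_anticipation M G D Y g d'"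
    and control_later: "enat d < d'"
    and a_pre_birth: "a < d" and d_pos: "0 < d"
begin

lemma untreated_before_d:
  assumes "b < d"
  shows "APO M G D Y g (enat d) (enat d) b = APO M G D Y g (enat d) \<infinity> b"
    and "APO M G D Y g d' d' b = APO M G D Y g d' \<infinity> b"
proof -
  show "APO M G D Y g (enat d) (enat d) b = APO M G D Y g (enat d) \<infinity> b"
    using no_anticipationD[OF no_anticipation_d] assms by simp
  have "enat b < d'"
    using assms control_later by (meson enat_ord_simps(2) order.strict_trans)
  then show "APO M G D Y g d' d' b = APO M G D Y g d' \<infinity> b"
    using no_anticipationD[OF no_anticipation_d'] by blast
qed

lemma delta_APO_eq_APO_minus_gamma_PT:
  "delta_APO M G D Yo g d d' a = APO M G D Y g (enat d) \<infinity> a - gamma_PT M G D Y g d d' a"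
  using a_pre_birth d_pos
  by (simp add: delta_APO_def gamma_PT_def cexp_observed cexp_observed_diff untreated_before_d)

lemma delta_ATE_eq_gamma_PT: "delta_ATE M G D Yo g d d' a = gamma_PT M G D Y g d d' a"
  using a_pre_birth
  by (simp add: delta_ATE_def delta_APO_eq_APO_minus_gamma_PT cexp_observed untreated_before_d)

lemma delta_theta_eq_odds:
  assumes "delta_APO M G D Yo g d d' a \<noteq> 0" and "APO M G D Y g (enat d) \<infinity> a \<noteq> 0"
  defines "\<rho> \<equiv> gamma_PT M G D Y g d d' a / APO M G D Y g (enat d) \<infinity> a"
  shows "delta_theta M G D Yo g d d' a = \<rho> / (1 - \<rho>)" and "\<rho> \<noteq> 1"
  using assms
  by (auto simp: delta_theta_def delta_ATE_eq_gamma_PT delta_APO_eq_APO_minus_gamma_PT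
      field_simps)

end

end

theorem proposition1:
  fixes M :: "'w measure" and G :: "'w \<Rightarrow> gender" and D :: "'w \<Rightarrow> enat"
    and Y :: "nat \<Rightarrow> enat \<Rightarrow> 'w \<Rightarrow> real" and Yo :: "nat \<Rightarrow> 'w \<Rightarrow> real"
    and d :: nat and d' :: enat and a :: nat
  assumes "prob_space M"
    and "G \<in> M \<rightarrow>\<^sub>M count_space UNIV" and "D \<in> M \<rightarrow>\<^sub>M count_space UNIV"
    and "\<And>b e. integrable M (Y b e)"
    and consistency: "\<And>b w. w \<in> space M \<Longrightarrow> Yo b w = Y b (D w) w"
    and "\<And>g. measure M (grp M G D g (enat d)) > 0"
    and "\<And>g. measure M (grp M G D g d') > 0"
    and "enat d < d'" and "a < d - 1"
    and "\<And>g. no_anticipation M G D Y g (enat d)"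
    and "\<And>g. no_anticipation M G D Y g d'"
    and "\<And>g. delta_APO M G D Yo g d d' a \<noteq> 0"
    and "\<And>g. APO M G D Y g (enat d) \<infinity> a \<noteq> 0"
  shows "delta_theta M G D Yo Female d d' a = delta_theta M G D Yo Male d d' a
     \<longleftrightarrow> gamma_PT M G D Y Female d d' a / APO M G D Y Female (enat d) \<infinity> a
       = gamma_PT M G D Y Male d d' a / APO M G D Y Male (enat d) \<infinity> a"
proof -
  interpret potential_outcomes M G D Y Yo
    using assms(2-5) by unfold_locales
  have "a < d" "0 < d"
    using \<open>a < d - 1\<close> by simp_all
  note odds = delta_theta_eq_odds[OF assms(10,11,8) \<open>a < d\<close> \<open>0 < d\<close> assms(12,13)]
  show ?thesis
    using odds[of Female] odds[of Male] odds_eq_iff by metis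
qed

end
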